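(* Let $(G,\Lambda)$ be a self-similar action with $|\Lambda^0|<\infty$. Then for every cycline triple $(\mu,g,\nu)$, one has $s_\mu s_\mu^*=s_\nu s_\nu^*$ in $\mathcal{O}_{G,\Lambda}$.
   Context: Let $k\ge1$. A $k$-graph is a countable small category $\Lambda$ together with a functor $d:\Lambda\to\mathbb{N}^k$ (the degree map) with the unique factorization property: for every $\mu\in\Lambda$ and $m,n\in\mathbb{N}^k$ with $d(\mu)=m+n$ there are unique $\alpha,\beta\in\Lambda$ with $d(\alpha)=m$, $d(\beta)=n$ and $\mu=\alpha\beta$. Write $\Lambda^n=d^{-1}(n)$; $\Lambda^0$ is identified with the set of objects (vertices), and $r,s$ denote range and source. For $v\in\Lambda^0$ and $n\in\mathbb{N}^k$ write $v\Lambda^n=r^{-1}(v)\cap\Lambda^n$. All $k$-graphs are assumed row-finite ($|v\Lambda^n|<\infty$) and source-free ($v\Lambda^n\neq\emptyset$) for all $v,n$. Infinite paths: let $\Omega_k=\{(p,q)\in\mathbb{N}^k\times\mathbb{N}^k:p\le q\}$ with $r(p,q)=(p,p)$, $s(p,q)=(q,q)$, $(p,q)(q,m)=(p,m)$, $d(p,q)=q-p$. An infinite path is a degree-preserving functor $x:\Omega_k\to\Lambda$; $\Lambda^\infty$ is the set of infinite paths, $v\Lambda^\infty=\{x:x(0,0)=v\}$, and for $\mu\in\Lambda$, $x\in s(\mu)\Lambda^\infty$, $\mu x$ is the unique infinite path $y$ with $y(0,d(\mu))=\mu$ and $y(d(\mu)+p,d(\mu)+q)=x(p,q)$ for all $p\le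 q$. Self-similar actions: $G$ is a countable discrete group. A self-similar action $(G,\Lambda)$ consists of an action of $G$ on $\Lambda$ by automorphisms (bijections preserving $d$, $r$, $s$), written $g\cdot\mu$, and a restriction map $G\times\Lambda\to G$, $(g,\mu)\mapsto g|_\mu$, such that for all $g,h\in G$, $v\in\Lambda^0$ and $\mu,\nu$ with $s(\mu)=r(\nu)$: $g\cdot(\mu\nu)=(g\cdot\mu)(g|_\mu\cdot\nu)$; $g|_v=g$; $g|_{\mu\nu}=(g|_\mu)|_\nu$; $1_G|_\mu=1_G$; $(gh)|_\mu=g|_{h\cdot\mu}\,h|_\mu$. For $x\in\Lambda^\infty$, $(g\cdot x)(p,q)=g|_{x(0,p)}\cdot x(p,q)$. Cycline triples: a triple $(\mu,g,\nu)\in\Lambda\times G\times\Lambda$ with $s(\mu)=g\cdot s(\nu)$ is cycline if $\mu(g\cdot x)=\nu x$ for all $x\in s(\nu)\Lambda^\infty$. The algebra: for a self-similar action with $|\Lambda^0|<\infty$, $\mathcal{O}_{G,\Lambda}$ is the universal unital C*-algebra generated by unitaries $\{u_g\}_{g\in G}$ and partial isometries $\{s_\mu\}_{\mu\in\Lambda}$ such that $\{s_v\}_{v\in\Lambda^0}$ are mutually orthogonal projections; $s_{\mu\nu}=s_\mu s_\nu$ when $s(\mu)=r(\nu)$; $s_\mu^*s_\mu=s_{s(\mu)}$; $s_v=\sum_{\mu\in v\Lambda^n}s_\mu s_\mu^*$ for all $v\in\Lambda^0$, $n\in\mathbb{N}^k$; $u_{gh}=u_gu_h$; and $u_gs_\mu=s_{g\cdot\mu}u_{g|_\mu}$.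 *)

theory Defs
  imports Complex_Main "HOL-Library.Countable_Set" "HOL-Algebra.Group"
begin

text \<open>A unital C*-algebra: a complete normed unital algebra with a complex scalar
multiplication compatible with the real one, and an isometric-type involution
satisfying the C*-identity.  (Norm of the unit is 1, so these are nonzero algebras.)\<close>

class cstar_algebra = real_normed_algebra_1 + complete_space +
  fixes adj :: "'a \<Rightarrow> 'a"
    and scaleC :: "complex \<Rightarrow> 'a \<Rightarrow> 'a"
  assumes scaleC_scaleR: "scaleC (complex_of_real a) x = scaleR a x"
    and scaleC_add_left: "scaleC (a + b) x = scaleC a x + scaleC b x"
    and scaleC_add_right: "scaleC a (x + y) = scaleC a x + scaleC a y"
    and scaleC_scaleC: "scaleC a (scaleC b x) = scaleC (a * b) x"
    and scaleC_one: "scaleC 1 x = x"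
    and scaleC_mult_left: "scaleC a (x * y) = scaleC a x * y"
    and scaleC_mult_right: "scaleC a (x * y) = x * scaleC a y"
    and norm_scaleC: "norm (scaleC a x) = cmod a * norm x"
    and adj_adj: "adj (adj x) = x"
    and adj_add: "adj (x + y) = adj x + adj y"
    and adj_mult: "adj (x * y) = adj y * adj x"
    and adj_scaleC: "adj (scaleC a x) = scaleC (cnj a) (adj x)"
    and cstar_identity: "norm (adj x * x) = (norm x)^2"

text \<open>Elements of N^k are functions nat => nat vanishing from index k on.\<close>

definition inNk :: "nat \<Rightarrow> (nat \<Rightarrow> nat) \<Rightarrow> bool" where
  "inNk k m \<longleftrightarrow> (\<forall>i. k \<le> i \<longrightarrow> m i = 0)"

definition addv :: "(nat \<Rightarrow> nat) \<Rightarrow> (nat \<Rightarrow> nat) \<Rightarrow> nat \<Rightarrow> nat" where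
  "addv m n = (\<lambda>i. m i + n i)"

definition subv :: "(nat \<Rightarrow> nat) \<Rightarrow> (nat \<Rightarrow> nat) \<Rightarrow> nat \<Rightarrow> nat" where
  "subv m n = (\<lambda>i. m i - n i)"

definition leqv :: "(nat \<Rightarrow> nat) \<Rightarrow> (nat \<Rightarrow> nat) \<Rightarrow> bool" where
  "leqv m n \<longleftrightarrow> (\<forall>i. m i \<le> n i)"

definition zerov :: "nat \<Rightarrow> nat" where
  "zerov = (\<lambda>_. 0)"

text \<open>A small category with morphism set P, objects identified with identity morphisms,
range r, source s, composition c (c mu nu = mu nu, defined when s mu = r nu), and
degree functor d into N^k, with the unique factorisation property.\<close>

definition kgraph :: "nat \<Rightarrow> 'p set \<Rightarrow> ('p \<Rightarrow> 'p) \<Rightarrow> ('p \<Rightarrow> 'p) \<Rightarrow> ('p \<Rightarrow> 'p \<Rightarrow> 'p)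
    \<Rightarrow> ('p \<Rightarrow> nat \<Rightarrow> nat) \<Rightarrow> bool" where
  "kgraph k P r s c d \<longleftrightarrow>
     1 \<le> k \<and> countable P \<and>
     (\<forall>\<mu>\<in>P. r \<mu> \<in> P \<and> s \<mu> \<in> P \<and> inNk k (d \<mu>)) \<and>
     (\<forall>\<mu>\<in>P. r (r \<mu>) = r \<mu> \<and> s (r \<mu>) = r \<mu> \<and> r (s \<mu>) = s \<mu> \<and> s (s \<mu>) = s \<mu>) \<and>
     (\<forall>\<mu>\<in>P. c (r \<mu>) \<mu> = \<mu> \<and> c \<mu> (s \<mu>) = \<mu>) \<and>
     (\<forall>\<mu>\<in>P. \<forall>\<nu>\<in>P. s \<mu> = r \<nu> \<longrightarrow>
         c \<mu> \<nu> \<in> P \<and> r (c \<mu> \<nu>) = r \<mu> \<and> s (c \<mu> \<nu>) = s \<nu>) \<and>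
     (\<forall>\<mu>\<in>P. \<forall>\<nu>\<in>P. \<forall>\<eta>\<in>P. s \<mu> = r \<nu> \<and> s \<nu> = r \<eta> \<longrightarrow>
         c (c \<mu> \<nu>) \<eta> = c \<mu> (c \<nu> \<eta>)) \<and>
     (\<forall>\<mu>\<in>P. d (r \<mu>) = zerov) \<and>
     (\<forall>\<mu>\<in>P. \<forall>\<nu>\<in>P. s \<mu> = r \<nu> \<longrightarrow> d (c \<mu> \<nu>) = addv (d \<mu>) (d \<nu>)) \<and>
     (\<forall>\<mu>\<in>P. \<forall>m n. inNk k m \<and> inNk k n \<and> d \<mu> = addv m n \<longrightarrow>
         (\<exists>!ab. fst ab \<in> P \<and> snd ab \<in> P \<and> s (fst ab) = r (snd ab) \<and>
                d (fst ab) = m \<and> d (snd ab) = n \<and> \<mu> = c (fst ab) (snd ab)))"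

definition vertices :: "'p set \<Rightarrow> ('p \<Rightarrow> nat \<Rightarrow> nat) \<Rightarrow> 'p set" where
  "vertices P d = {v \<in> P. d v = zerov}"

definition vpaths :: "'p set \<Rightarrow> ('p \<Rightarrow> 'p) \<Rightarrow> ('p \<Rightarrow> nat \<Rightarrow> nat) \<Rightarrow> 'p \<Rightarrow> (nat \<Rightarrow> nat) \<Rightarrow> 'p set" where
  "vpaths P r d v n = {\<mu> \<in> P. r \<mu> = v \<and> d \<mu> = n}"

definition row_finite_source_free :: "nat \<Rightarrow> 'p set \<Rightarrow> ('p \<Rightarrow> 'p) \<Rightarrow> ('p \<Rightarrow> nat \<Rightarrow> nat) \<Rightarrow> bool" where
  "row_finite_source_free k P r d \<longleftrightarrow>
     (\<forall>v\<in>vertices P d. \<forall>n. inNk k n \<longrightarrow> finite (vpaths P r d v n) \<and> vpaths P r d v n \<noteq> {})"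

text \<open>An infinite path is a degree-preserving functor from Omega_k; x p q is its value at
(p,q) for p <= q in N^k (values elsewhere are irrelevant).\<close>

definition is_infpath :: "nat \<Rightarrow> 'p set \<Rightarrow> ('p \<Rightarrow> 'p) \<Rightarrow> ('p \<Rightarrow> 'p) \<Rightarrow> ('p \<Rightarrow> 'p \<Rightarrow> 'p)
    \<Rightarrow> ('p \<Rightarrow> nat \<Rightarrow> nat) \<Rightarrow> ((nat \<Rightarrow> nat) \<Rightarrow> (nat \<Rightarrow> nat) \<Rightarrow> 'p) \<Rightarrow> bool" where
  "is_infpath k P r s c d x \<longleftrightarrow>
     (\<forall>p q. inNk k p \<and> inNk k q \<and> leqv p q \<longrightarrow>
        x p q \<in> P \<and> d (x p q) = subv q p \<and> r (x p q) = x p p \<and> s (x p q) = x q q) \<and>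
     (\<forall>p q m. inNk k p \<and> inNk k q \<and> inNk k m \<and> leqv p q \<and> leqv q m \<longrightarrow>
        x p m = c (x p q) (x q m))"

text \<open>is_cat mu x y: y is the infinite path mu x.\<close>
definition is_cat :: "nat \<Rightarrow> 'p set \<Rightarrow> ('p \<Rightarrow> 'p) \<Rightarrow> ('p \<Rightarrow> 'p) \<Rightarrow> ('p \<Rightarrow> 'p \<Rightarrow> 'p)
    \<Rightarrow> ('p \<Rightarrow> nat \<Rightarrow> nat) \<Rightarrow> 'p \<Rightarrow> ((nat \<Rightarrow> nat) \<Rightarrow> (nat \<Rightarrow> nat) \<Rightarrow> 'p)
    \<Rightarrow> ((nat \<Rightarrow> nat) \<Rightarrow> (nat \<Rightarrow> nat) \<Rightarrow> 'p) \<Rightarrow> bool" where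
  "is_cat k P r s c d \<mu> x y \<longleftrightarrow>
     is_infpath k P r s c d y \<and> y zerov (d \<mu>) = \<mu> \<and>
     (\<forall>p q. inNk k p \<and> inNk k q \<and> leqv p q \<longrightarrow> y (addv (d \<mu>) p) (addv (d \<mu>) q) = x p q)"

definition self_similar :: "nat \<Rightarrow> 'p set \<Rightarrow> ('p \<Rightarrow> 'p) \<Rightarrow> ('p \<Rightarrow> 'p) \<Rightarrow> ('p \<Rightarrow> 'p \<Rightarrow> 'p)
    \<Rightarrow> ('p \<Rightarrow> nat \<Rightarrow> nat) \<Rightarrow> ('g, 'b) monoid_scheme \<Rightarrow> ('g \<Rightarrow> 'p \<Rightarrow> 'p) \<Rightarrow> ('g \<Rightarrow> 'p \<Rightarrow> 'g) \<Rightarrow> bool" where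
  "self_similar k P r s c d G act res \<longleftrightarrow>
     group G \<and> countable (carrier G) \<and>
     (\<forall>g\<in>carrier G. bij_betw (act g) P P \<and>
        (\<forall>\<mu>\<in>P. d (act g \<mu>) = d \<mu> \<and> r (act g \<mu>) = act g (r \<mu>) \<and> s (act g \<mu>) = act g (s \<mu>))) \<and>
     (\<forall>\<mu>\<in>P. act \<one>\<^bsub>G\<^esub> \<mu> = \<mu>) \<and>
     (\<forall>g\<in>carrier G. \<forall>h\<in>carrier G. \<forall>\<mu>\<in>P. act (g \<otimes>\<^bsub>G\<^esub> h) \<mu> = act g (act h \<mu>)) \<and>
     (\<forall>g\<in>carrier G. \<forall>\<mu>\<in>P. res g \<mu> \<in> carrier G) \<and>
     (\<forall>g\<in>carrier G. \<forall>\<mu>\<in>P. \<forall>\<nu>\<in>P. s \<mu> = r \<nu> \<longrightarrow>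
        act g (c \<mu> \<nu>) = c (act g \<mu>) (act (res g \<mu>) \<nu>)) \<and>
     (\<forall>g\<in>carrier G. \<forall>v\<in>vertices P d. res g v = g) \<and>
     (\<forall>g\<in>carrier G. \<forall>\<mu>\<in>P. \<forall>\<nu>\<in>P. s \<mu> = r \<nu> \<longrightarrow> res g (c \<mu> \<nu>) = res (res g \<mu>) \<nu>) \<and>
     (\<forall>\<mu>\<in>P. res \<one>\<^bsub>G\<^esub> \<mu> = \<one>\<^bsub>G\<^esub>) \<and>
     (\<forall>g\<in>carrier G. \<forall>h\<in>carrier G. \<forall>\<mu>\<in>P.
        res (g \<otimes>\<^bsub>G\<^esub> h) \<mu> = res g (act h \<mu>) \<otimes>\<^bsub>G\<^esub> res h \<mu>)"

definition act_inf :: "('g \<Rightarrow> 'p \<Rightarrow> 'p) \<Rightarrow> ('g \<Rightarrow> 'p \<Rightarrow> 'g) \<Rightarrow> 'g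
    \<Rightarrow> ((nat \<Rightarrow> nat) \<Rightarrow> (nat \<Rightarrow> nat) \<Rightarrow> 'p) \<Rightarrow> (nat \<Rightarrow> nat) \<Rightarrow> (nat \<Rightarrow> nat) \<Rightarrow> 'p" where
  "act_inf act res g x = (\<lambda>p q. act (res g (x zerov p)) (x p q))"

definition cycline :: "nat \<Rightarrow> 'p set \<Rightarrow> ('p \<Rightarrow> 'p) \<Rightarrow> ('p \<Rightarrow> 'p) \<Rightarrow> ('p \<Rightarrow> 'p \<Rightarrow> 'p)
    \<Rightarrow> ('p \<Rightarrow> nat \<Rightarrow> nat) \<Rightarrow> ('g, 'b) monoid_scheme \<Rightarrow> ('g \<Rightarrow> 'p \<Rightarrow> 'p) \<Rightarrow> ('g \<Rightarrow> 'p \<Rightarrow> 'g)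
    \<Rightarrow> 'p \<Rightarrow> 'g \<Rightarrow> 'p \<Rightarrow> bool" where
  "cycline k P r s c d G act res \<mu> g \<nu> \<longleftrightarrow>
     \<mu> \<in> P \<and> \<nu> \<in> P \<and> g \<in> carrier G \<and> s \<mu> = act g (s \<nu>) \<and>
     (\<forall>x. is_infpath k P r s c d x \<and> x zerov zerov = s \<nu> \<longrightarrow>
        (\<exists>y. is_cat k P r s c d \<mu> (act_inf act res g x) y \<and> is_cat k P r s c d \<nu> x y))"

definition OGL_rep :: "nat \<Rightarrow> 'p set \<Rightarrow> ('p \<Rightarrow> 'p) \<Rightarrow> ('p \<Rightarrow> 'p) \<Rightarrow> ('p \<Rightarrow> 'p \<Rightarrow> 'p)
    \<Rightarrow> ('p \<Rightarrow> nat \<Rightarrow> nat) \<Rightarrow> ('g, 'b) monoid_scheme \<Rightarrow> ('g \<Rightarrow> 'p \<Rightarrow> 'p) \<Rightarrow> ('g \<Rightarrow> 'p \<Rightarrow> 'g)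
    \<Rightarrow> ('g \<Rightarrow> 'a::cstar_algebra) \<Rightarrow> ('p \<Rightarrow> 'a) \<Rightarrow> bool" where
  "OGL_rep k P r s c d G act res u t \<longleftrightarrow>
     (\<forall>g\<in>carrier G. adj (u g) * u g = 1 \<and> u g * adj (u g) = 1) \<and>
     (\<forall>\<mu>\<in>P. t \<mu> * adj (t \<mu>) * t \<mu> = t \<mu>) \<and>
     (\<forall>v\<in>vertices P d. t v * t v = t v \<and> adj (t v) = t v) \<and>
     (\<forall>v\<in>vertices P d. \<forall>w\<in>vertices P d. v \<noteq> w \<longrightarrow> t v * t w = 0) \<and>
     (\<forall>\<mu>\<in>P. \<forall>\<nu>\<in>P. s \<mu> = r \<nu> \<longrightarrow> t (c \<mu> \<nu>) = t \<mu> * t \<nu>) \<and>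
     (\<forall>\<mu>\<in>P. adj (t \<mu>) * t \<mu> = t (s \<mu>)) \<and>
     (\<forall>v\<in>vertices P d. \<forall>n. inNk k n \<longrightarrow>
        t v = (\<Sum>\<mu>\<in>vpaths P r d v n. t \<mu> * adj (t \<mu>))) \<and>
     (\<forall>g\<in>carrier G. \<forall>h\<in>carrier G. u (g \<otimes>\<^bsub>G\<^esub> h) = u g * u h) \<and>
     (\<forall>g\<in>carrier G. \<forall>\<mu>\<in>P. u g * t \<mu> = t (act g \<mu>) * u (res g \<mu>))"

end

theory Submission
  imports Defs
begin

text \<open>Let N be the coordinatewise maximum of d(\<mu>) and d(\<nu>). The Cuntz-Krieger relation
  at s(\<mu>) in degree N - d(\<mu>) writes s_\<mu> s_\<mu>^* as the sum of s_\<lambda> s_\<lambda>^* over the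
  paths \<lambda> = \<mu>b with b in s(\<mu>)\<Lambda>^(N - d(\<mu>)), and likewise for \<nu>. The cycline property
  makes these two sets of paths of degree N equal: if x is an infinite path with
  \<nu>a = \<nu>x(0, N - d(\<nu>)), then \<nu>x = \<mu>(g x), and the initial segment of degree N of this path
  is both \<nu>a and \<mu>(g x(0, N - d(\<mu>))); the other inclusion is the same argument applied to
  g^-1 b. The infinite paths needed exist because in a source-free k-graph every path can be
  prolonged indefinitely by paths of degree (1,...,1).\<close>

lemma addv_zerov [simp]: "addv m zerov = m" "addv zerov m = m"
  by (simp_all add: addv_def zerov_def)

lemma subv_zerov [simp]: "subv m zerov = m"
  by (simp add: subv_def zerov_def)

lemma subv_self [simp]: "subv m m = zerov"
  by (simp add: subv_def zerov_def)

lemma subv_addv_left [simp]: "subv (addv m n) m = n"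
  by (simp add: subv_def addv_def)

lemma addv_subv: "leqv m n \<Longrightarrow> addv m (subv n m) = n"
  by (auto simp: addv_def subv_def leqv_def fun_eq_iff)

lemma subv_subv: "leqv p q \<Longrightarrow> leqv q m \<Longrightarrow> subv (subv m p) (subv q p) = subv m q"
  by (auto simp: subv_def leqv_def fun_eq_iff)

lemma leqv_refl [simp]: "leqv m m"
  by (simp add: leqv_def)

lemma zerov_leqv [simp]: "leqv zerov m"
  by (simp add: leqv_def zerov_def)

lemma leqv_trans: "leqv m n \<Longrightarrow> leqv n p \<Longrightarrow> leqv m p"
  unfolding leqv_def using le_trans by blast

lemma subv_mono: "leqv m n \<Longrightarrow> leqv (subv m p) (subv n p)"
  by (simp add: leqv_def subv_def diff_le_mono)

lemma inNk_zerov [simp]: "inNk k zerov"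
  by (simp add: inNk_def zerov_def)

lemma inNk_subv: "inNk k m \<Longrightarrow> inNk k (subv m n)"
  by (simp add: inNk_def subv_def)

locale k_graph =
  fixes k :: nat and P :: "'p set" and r s :: "'p \<Rightarrow> 'p" and c :: "'p \<Rightarrow> 'p \<Rightarrow> 'p"
    and d :: "'p \<Rightarrow> nat \<Rightarrow> nat"
  assumes kgraph: "kgraph k P r s c d"
begin

lemma
  shows r_in: "\<mu> \<in> P \<Longrightarrow> r \<mu> \<in> P"
    and s_in: "\<mu> \<in> P \<Longrightarrow> s \<mu> \<in> P"
    and inNk_d: "\<mu> \<in> P \<Longrightarrow> inNk k (d \<mu>)"
    and s_r: "\<mu> \<in> P \<Longrightarrow> s (r \<mu>) = r \<mu>"
    and r_s: "\<mu> \<in> P \<Longrightarrow> r (s \<mu>) = s \<mu>"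
    and comp_r_left: "\<mu> \<in> P \<Longrightarrow> c (r \<mu>) \<mu> = \<mu>"
    and comp_s_right: "\<mu> \<in> P \<Longrightarrow> c \<mu> (s \<mu>) = \<mu>"
    and d_r: "\<mu> \<in> P \<Longrightarrow> d (r \<mu>) = zerov"
  using kgraph by (simp_all add: kgraph_def)

lemma
  assumes "\<mu> \<in> P" "\<nu> \<in> P" "s \<mu> = r \<nu>"
  shows comp_in: "c \<mu> \<nu> \<in> P"
    and r_comp: "r (c \<mu> \<nu>) = r \<mu>"
    and s_comp: "s (c \<mu> \<nu>) = s \<nu>"
    and d_comp: "d (c \<mu> \<nu>) = addv (d \<mu>) (d \<nu>)"
  using kgraph assms by (simp_all add: kgraph_def)

lemma comp_assoc:
  "\<mu> \<in> P \<Longrightarrow> \<nu> \<in> P \<Longrightarrow> \<eta> \<in> P \<Longrightarrow> s \<mu> = r \<nu> \<Longrightarrow> s \<nu> = r \<eta> \<Longrightarrow>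
    c (c \<mu> \<nu>) \<eta> = c \<mu> (c \<nu> \<eta>)"
  using kgraph by (simp add: kgraph_def)

lemma unique_factorisation:
  "\<mu> \<in> P \<Longrightarrow> inNk k m \<Longrightarrow> inNk k n \<Longrightarrow> d \<mu> = addv m n \<Longrightarrow>
    \<exists>!ab. fst ab \<in> P \<and> snd ab \<in> P \<and> s (fst ab) = r (snd ab) \<and>
      d (fst ab) = m \<and> d (snd ab) = n \<and> \<mu> = c (fst ab) (snd ab)"
  using kgraph by (simp add: kgraph_def)

lemma d_s: "\<mu> \<in> P \<Longrightarrow> d (s \<mu>) = zerov"
  using d_r[of "s \<mu>"] r_s s_in by simp

lemma s_in_vertices: "\<mu> \<in> P \<Longrightarrow> s \<mu> \<in> vertices P d"
  unfolding vertices_def using s_in d_s by blast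

definition factor :: "'p \<Rightarrow> (nat \<Rightarrow> nat) \<Rightarrow> 'p \<times> 'p" where
  "factor w m = (THE ab. fst ab \<in> P \<and> snd ab \<in> P \<and> s (fst ab) = r (snd ab) \<and>
     d (fst ab) = m \<and> d (snd ab) = subv (d w) m \<and> w = c (fst ab) (snd ab))"

definition prefix :: "'p \<Rightarrow> (nat \<Rightarrow> nat) \<Rightarrow> 'p" where
  "prefix w m = fst (factor w m)"

definition suffix :: "'p \<Rightarrow> (nat \<Rightarrow> nat) \<Rightarrow> 'p" where
  "suffix w m = snd (factor w m)"

lemma
  assumes "w \<in> P" "inNk k m" "leqv m (d w)"
  shows prefix_in: "prefix w m \<in> P"
    and suffix_in: "suffix w m \<in> P"
    and s_prefix: "s (prefix w m) = r (suffix w m)"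
    and d_prefix: "d (prefix w m) = m"
    and d_suffix: "d (suffix w m) = subv (d w) m"
    and prefix_suffix: "c (prefix w m) (suffix w m) = w"
  using theI'[OF unique_factorisation[OF assms(1,2) inNk_subv[OF inNk_d[OF assms(1)]]
        addv_subv[OF assms(3), symmetric]]]
  unfolding prefix_def suffix_def factor_def by auto

lemma
  assumes "\<alpha> \<in> P" "\<beta> \<in> P" "s \<alpha> = r \<beta>"
  shows prefix_comp: "prefix (c \<alpha> \<beta>) (d \<alpha>) = \<alpha>"
    and suffix_comp: "suffix (c \<alpha> \<beta>) (d \<alpha>) = \<beta>"
proof -
  have "factor (c \<alpha> \<beta>) (d \<alpha>) = (\<alpha>, \<beta>)"
    unfolding factor_def d_comp[OF assms] subv_addv_left
    by (rule the1_equality[OF unique_factorisation[OF comp_in[OF assms]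
          inNk_d[OF assms(1)] inNk_d[OF assms(2)] d_comp[OF assms]]]) (simp add: assms)
  then show "prefix (c \<alpha> \<beta>) (d \<alpha>) = \<alpha>" "suffix (c \<alpha> \<beta>) (d \<alpha>) = \<beta>"
    by (simp_all add: prefix_def suffix_def)
qed

lemma
  assumes "w \<in> P"
  shows prefix_zerov: "prefix w zerov = r w"
    and suffix_zerov: "suffix w zerov = w"
  using prefix_comp[of "r w" w] suffix_comp[of "r w" w] assms
  by (simp_all add: r_in s_r comp_r_left d_r)

lemma prefix_d: "w \<in> P \<Longrightarrow> prefix w (d w) = w"
  using prefix_comp[of w "s w"] by (simp add: s_in r_s comp_s_right)

lemma
  assumes "w \<in> P" "inNk k m" "leqv m (d w)"
  shows r_prefix: "r (prefix w m) = r w"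
    and s_suffix: "s (suffix w m) = s w"
  using r_comp s_comp prefix_in suffix_in s_prefix prefix_suffix assms by metis+

lemma
  assumes "w \<in> P" "inNk k a" "inNk k b" "leqv a b" "leqv b (d w)"
  shows prefix_split: "prefix w b = c (prefix w a) (prefix (suffix w a) (subv b a))"
    and suffix_suffix: "suffix w b = suffix (suffix w a) (subv b a)"
proof -
  have a_w: "leqv a (d w)" using assms(4,5) by (rule leqv_trans)
  define \<alpha> \<beta> \<gamma> where "\<alpha> = prefix w a" and "\<beta> = prefix (suffix w a) (subv b a)"
    and "\<gamma> = suffix (suffix w a) (subv b a)"
  have ba: "inNk k (subv b a)" "leqv (subv b a) (d (suffix w a))"
    using assms a_w by (simp_all add: inNk_subv d_suffix subv_mono)
  have \<alpha>: "\<alpha> \<in> P" "d \<alpha> = a" "s \<alpha> = r (suffix w a)" "c \<alpha> (suffix w a) = w"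
    unfolding \<alpha>_def using assms(1,2) a_w by (simp_all add: prefix_in d_prefix s_prefix prefix_suffix)
  have \<beta>\<gamma>: "\<beta> \<in> P" "\<gamma> \<in> P" "s \<beta> = r \<gamma>" "d \<beta> = subv b a" "c \<beta> \<gamma> = suffix w a"
    unfolding \<beta>_def \<gamma>_def using suffix_in[OF assms(1,2) a_w] ba
    by (simp_all add: prefix_in suffix_in d_prefix s_prefix prefix_suffix)
  have s\<alpha>: "s \<alpha> = r \<beta>" using \<alpha>(3) \<beta>\<gamma> r_comp by metis
  have w: "w = c (c \<alpha> \<beta>) \<gamma>" using \<alpha> \<beta>\<gamma> s\<alpha> comp_assoc by metis
  have "d (c \<alpha> \<beta>) = b" using \<alpha> \<beta>\<gamma> s\<alpha> assms(4) by (simp add: d_comp addv_subv)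
  then show "prefix w b = c \<alpha> \<beta>" "suffix w b = \<gamma>"
    using prefix_comp suffix_comp comp_in s_comp \<alpha> \<beta>\<gamma> s\<alpha> w by metis+
qed

lemma
  assumes "w \<in> P" "\<beta> \<in> P" "s w = r \<beta>" "inNk k a" "leqv a (d w)"
  shows prefix_comp_right: "prefix (c w \<beta>) a = prefix w a"
    and suffix_comp_right: "suffix (c w \<beta>) a = c (suffix w a) \<beta>"
proof -
  have s_suffix_w: "s (suffix w a) = r \<beta>" using s_suffix assms by simp
  have "c w \<beta> = c (prefix w a) (c (suffix w a) \<beta>)"
    using comp_assoc prefix_in suffix_in s_prefix prefix_suffix s_suffix_w assms by metis
  moreover have "s (prefix w a) = r (c (suffix w a) \<beta>)"
    using r_comp s_prefix suffix_in s_suffix_w assms by metis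
  ultimately show "prefix (c w \<beta>) a = prefix w a" "suffix (c w \<beta>) a = c (suffix w a) \<beta>"
    using prefix_comp suffix_comp comp_in prefix_in suffix_in d_prefix s_suffix_w assms by metis+
qed

text \<open>In the notation of the paper, prefix w m = w(0, m), suffix w m = w(m, d(w)) and
  segment w p q = w(p, q).\<close>

definition segment :: "'p \<Rightarrow> (nat \<Rightarrow> nat) \<Rightarrow> (nat \<Rightarrow> nat) \<Rightarrow> 'p" where
  "segment w p q = prefix (suffix w p) (subv q p)"

lemma segment_zerov_left: "w \<in> P \<Longrightarrow> segment w zerov q = prefix w q"
  by (simp add: segment_def suffix_zerov)

lemma segment_diag:
  "w \<in> P \<Longrightarrow> inNk k p \<Longrightarrow> leqv p (d w) \<Longrightarrow> segment w p p = r (suffix w p)"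
  by (simp add: segment_def prefix_zerov suffix_in)

lemma subv_leqv_d_suffix:
  assumes "w \<in> P" "inNk k p" "leqv p q" "leqv q (d w)"
  shows "leqv (subv q p) (d (suffix w p))"
  using subv_mono[OF assms(4)] d_suffix[OF assms(1,2) leqv_trans[OF assms(3,4)]] by simp

context
  fixes w p q
  assumes w: "w \<in> P" and p: "inNk k p" and q: "inNk k q"
    and p_q: "leqv p q" and q_w: "leqv q (d w)"
begin

private lemma suffix_p_in: "suffix w p \<in> P"
  using suffix_in w p leqv_trans[OF p_q q_w] .

private lemmas prefix_bounds = inNk_subv[OF q] subv_leqv_d_suffix[OF w p p_q q_w]

lemma segment_in: "segment w p q \<in> P"
  unfolding segment_def by (rule prefix_in[OF suffix_p_in prefix_bounds])

lemma d_segment: "d (segment w p q) = subv q p"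
  unfolding segment_def by (rule d_prefix[OF suffix_p_in prefix_bounds])

lemma r_segment: "r (segment w p q) = segment w p p"
  unfolding segment_diag[OF w p leqv_trans[OF p_q q_w]] unfolding segment_def
  by (rule r_prefix[OF suffix_p_in prefix_bounds])

lemma s_segment: "s (segment w p q) = segment w q q"
proof -
  have "s (segment w p q) = r (suffix (suffix w p) (subv q p))"
    unfolding segment_def by (rule s_prefix[OF suffix_p_in prefix_bounds])
  also have "\<dots> = r (suffix w q)"
    by (simp add: suffix_suffix[OF w p q p_q q_w])
  also have "\<dots> = segment w q q"
    by (simp add: segment_diag[OF w q q_w])
  finally show ?thesis .
qed

lemma segment_comp_right:
  assumes "\<beta> \<in> P" "s w = r \<beta>"
  shows "segment (c w \<beta>) p q = segment w p q"
proof -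
  have p_w: "leqv p (d w)" using p_q q_w by (rule leqv_trans)
  have "s (suffix w p) = r \<beta>" using s_suffix[OF w p p_w] assms(2) by simp
  then show ?thesis
    unfolding segment_def suffix_comp_right[OF w assms p p_w]
    by (rule prefix_comp_right[OF suffix_p_in assms(1) _ prefix_bounds])
qed

end

lemma segment_split:
  assumes w: "w \<in> P" and "inNk k p" "inNk k q" "inNk k m" "leqv p q" "leqv q m" "leqv m (d w)"
  shows "segment w p m = c (segment w p q) (segment w q m)"
proof -
  have q_w: "leqv q (d w)" and p_m: "leqv p m" using assms leqv_trans by blast+
  have p_w: "leqv p (d w)" using assms(5) q_w by (rule leqv_trans)
  have "prefix (suffix w p) (subv m p) = c (prefix (suffix w p) (subv q p))
      (prefix (suffix (suffix w p) (subv q p)) (subv (subv m p) (subv q p)))"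
    by (rule prefix_split[OF suffix_in[OF w assms(2) p_w] inNk_subv inNk_subv subv_mono
          subv_leqv_d_suffix[OF w assms(2) p_m assms(7)]]) (use assms in simp_all)
  moreover have "suffix (suffix w p) (subv q p) = suffix w q"
    using suffix_suffix[OF w assms(2,3,5) q_w] by simp
  moreover have "subv (subv m p) (subv q p) = subv m q"
    using subv_subv assms(5,6) .
  ultimately show ?thesis unfolding segment_def by simp
qed

end

locale source_free_k_graph = k_graph +
  assumes row_finite_source_free: "row_finite_source_free k P r d"
begin

definition ones :: "nat \<Rightarrow> nat" where
  "ones = (\<lambda>i. if i < k then 1 else 0)"

definition edge_from where
  "edge_from v = (SOME \<beta>. \<beta> \<in> P \<and> r \<beta> = v \<and> d \<beta> = ones)"

lemma edge_from_spec:
  assumes "v \<in> vertices P d"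
  shows "edge_from v \<in> P \<and> r (edge_from v) = v \<and> d (edge_from v) = ones"
proof -
  have "inNk k ones" by (simp add: inNk_def ones_def)
  then have "vpaths P r d v ones \<noteq> {}"
    using row_finite_source_free assms unfolding row_finite_source_free_def by blast
  then have "\<exists>\<beta>. \<beta> \<in> P \<and> r \<beta> = v \<and> d \<beta> = ones"
    unfolding vpaths_def by blast
  then show ?thesis
    unfolding edge_from_def by (rule someI_ex)
qed

primrec extension where
  "extension a 0 = a"
| "extension a (Suc j) = c (extension a j) (edge_from (s (extension a j)))"

lemma extension_spec:
  assumes "a \<in> P"
  shows "extension a j \<in> P \<and> r (extension a j) = r a \<and>
    d (extension a j) = (\<lambda>i. d a i + (if i < k then j else 0))"
proof (induction j)
  case 0
  then show ?case using assms by simp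
next
  case (Suc j)
  let ?w = "extension a j" and ?e = "edge_from (s (extension a j))"
  have "?e \<in> P" "r ?e = s ?w" "d ?e = ones"
    using edge_from_spec s_in_vertices Suc.IH by blast+
  then show ?case
    using Suc.IH comp_in r_comp d_comp by (auto simp: addv_def ones_def)
qed

lemma leqv_d_extension: "a \<in> P \<Longrightarrow> j \<le> j' \<Longrightarrow> leqv (d (extension a j)) (d (extension a j'))"
  using extension_spec by (auto simp: leqv_def)

lemma segment_extension:
  assumes "a \<in> P" "j \<le> j'" "inNk k p" "inNk k q" "leqv p q" "leqv q (d (extension a j))"
  shows "segment (extension a j') p q = segment (extension a j) p q"
  using assms(2)
proof (induction j' rule: dec_induct)
  case base
  then show ?case by simp
next
  case (step j')
  let ?w = "extension a j'"
  have "leqv q (d ?w)"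
    using leqv_d_extension[OF assms(1) step(1)] assms(6) leqv_trans by blast
  then have "segment (extension a (Suc j')) p q = segment ?w p q"
    using segment_comp_right edge_from_spec s_in_vertices extension_spec assms(1,3-5) by simp
  then show ?case using step.IH by simp
qed

definition total_degree :: "(nat \<Rightarrow> nat) \<Rightarrow> nat" where
  "total_degree q = (\<Sum>i<k. q i)"

lemma leqv_d_extension_total_degree:
  assumes "a \<in> P" "inNk k q"
  shows "leqv q (d (extension a (total_degree q)))"
proof -
  have "q i \<le> d a i + (if i < k then total_degree q else 0)" for i
  proof (cases "i < k")
    case True
    then have "q i \<le> total_degree q" unfolding total_degree_def by (intro member_le_sum) auto
    then show ?thesis using True by simp
  next
    case False
    then show ?thesis using assms(2) unfolding inNk_def by auto
  qed
  then show ?thesis using extension_spec[OF assms(1)] by (simp add: leqv_def)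
qed

lemma total_degree_mono: "leqv q m \<Longrightarrow> total_degree q \<le> total_degree m"
  unfolding total_degree_def leqv_def by (intro sum_mono) auto

text \<open>Since total_degree q bounds every coordinate of q, the finite path
  extension a (total_degree q) already contains the segment (p, q).\<close>

definition infinite_extension where
  "infinite_extension a = (\<lambda>p q. segment (extension a (total_degree q)) p q)"

lemma segment_extension_eq_infinite_extension:
  assumes "a \<in> P" "inNk k p" "inNk k q" "leqv p q" "total_degree q \<le> j"
  shows "segment (extension a j) p q = infinite_extension a p q"
  unfolding infinite_extension_def
  by (rule segment_extension[OF assms(1,5,2-4) leqv_d_extension_total_degree[OF assms(1,3)]])

lemma is_infpath_infinite_extension:
  assumes "a \<in> P"
  shows "is_infpath k P r s c d (infinite_extension a)"
  unfolding is_infpath_def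
proof (intro conjI allI impI)
  fix p q assume pq: "inNk k p \<and> inNk k q \<and> leqv p q"
  let ?w = "extension a (total_degree q)"
  have w: "?w \<in> P" "leqv q (d ?w)"
    using extension_spec leqv_d_extension_total_degree assms pq by blast+
  show "infinite_extension a p q \<in> P" "d (infinite_extension a p q) = subv q p"
    "s (infinite_extension a p q) = infinite_extension a q q"
    unfolding infinite_extension_def using segment_in d_segment s_segment w pq by blast+
  have "r (infinite_extension a p q) = segment ?w p p"
    unfolding infinite_extension_def using r_segment w pq by blast
  also have "\<dots> = infinite_extension a p p"
    by (rule segment_extension_eq_infinite_extension) (use assms pq total_degree_mono in auto)
  finally show "r (infinite_extension a p q) = infinite_extension a p p" .
next
  fix p q m assume pqm: "inNk k p \<and> inNk k q \<and> inNk k m \<and> leqv p q \<and> leqv q m"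
  let ?w = "extension a (total_degree m)"
  have w: "?w \<in> P" "leqv m (d ?w)"
    using extension_spec leqv_d_extension_total_degree assms pqm by blast+
  have "infinite_extension a p m = c (segment ?w p q) (segment ?w q m)"
    unfolding infinite_extension_def using segment_split w pqm by blast
  also have "segment ?w p q = infinite_extension a p q"
    using segment_extension_eq_infinite_extension total_degree_mono assms pqm by blast
  also have "segment ?w q m = infinite_extension a q m"
    unfolding infinite_extension_def ..
  finally show "infinite_extension a p m = c (infinite_extension a p q) (infinite_extension a q m)" .
qed

lemma infinite_extension_initial:
  assumes "a \<in> P"
  shows "infinite_extension a zerov zerov = r a" "infinite_extension a zerov (d a) = a"
proof -
  show "infinite_extension a zerov zerov = r a"
    unfolding infinite_extension_def using assms
    by (simp add: segment_zerov_left extension_spec prefix_zerov)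
  have "infinite_extension a zerov (d a) = segment (extension a 0) zerov (d a)"
    unfolding infinite_extension_def
    by (rule segment_extension) (use assms inNk_d in simp_all)
  then show "infinite_extension a zerov (d a) = a"
    using assms by (simp add: segment_zerov_left prefix_d)
qed

lemma path_is_initial_segment_of_infpath:
  assumes "a \<in> P"
  obtains x where "is_infpath k P r s c d x" "x zerov zerov = r a" "x zerov (d a) = a"
  using is_infpath_infinite_extension infinite_extension_initial assms by blast

end

lemma infpath_initial_segment:
  assumes "is_infpath k P r s c d x" "inNk k q"
  shows "x zerov q \<in> P" "d (x zerov q) = q" "r (x zerov q) = x zerov zerov"
  using assms unfolding is_infpath_def by (metis inNk_zerov zerov_leqv subv_zerov)+

lemma is_cat_initial_segment:
  assumes "is_cat k P r s c d \<mu> x y" "inNk k N" "inNk k (d \<mu>)" "leqv (d \<mu>) N"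
  shows "y zerov N = c \<mu> (x zerov (subv N (d \<mu>)))"
proof -
  have y: "is_infpath k P r s c d y" "y zerov (d \<mu>) = \<mu>"
    and shift: "\<And>p q. inNk k p \<Longrightarrow> inNk k q \<Longrightarrow> leqv p q \<Longrightarrow>
      y (addv (d \<mu>) p) (addv (d \<mu>) q) = x p q"
    using assms(1) unfolding is_cat_def by blast+
  have "y zerov N = c (y zerov (d \<mu>)) (y (d \<mu>) N)"
    using y(1) assms(2-4) unfolding is_infpath_def by simp
  moreover have "y (d \<mu>) N = x zerov (subv N (d \<mu>))"
    using shift[of zerov "subv N (d \<mu>)"] assms(2,4) by (simp add: inNk_subv addv_subv)
  ultimately show ?thesis using y(2) by simp
qed

lemma OGL_rep_comp:
  assumes "OGL_rep k P r s c d G act res u t" "\<mu> \<in> P" "\<nu> \<in> P" "s \<mu> = r \<nu>"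
  shows "t (c \<mu> \<nu>) = t \<mu> * t \<nu>"
proof -
  have "\<forall>\<mu>\<in>P. \<forall>\<nu>\<in>P. s \<mu> = r \<nu> \<longrightarrow> t (c \<mu> \<nu>) = t \<mu> * t \<nu>"
    using assms(1) unfolding OGL_rep_def by (elim conjE) assumption
  then show ?thesis using assms(2-4) by blast
qed

lemma OGL_rep_vertex_sum:
  assumes "OGL_rep k P r s c d G act res u t" "v \<in> vertices P d" "inNk k n"
  shows "t v = (\<Sum>\<mu>\<in>vpaths P r d v n. t \<mu> * adj (t \<mu>))"
proof -
  have "\<forall>v\<in>vertices P d. \<forall>n. inNk k n \<longrightarrow> t v = (\<Sum>\<mu>\<in>vpaths P r d v n. t \<mu> * adj (t \<mu>))"
    using assms(1) unfolding OGL_rep_def by (elim conjE) assumption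
  then show ?thesis using assms(2,3) by blast
qed

lemma (in k_graph) range_projection_expand:
  assumes "OGL_rep k P r s c d G act res u t" "w \<in> P" "inNk k n"
  shows "t w * adj (t w) = (\<Sum>l\<in>c w ` vpaths P r d (s w) n. t l * adj (t l))"
proof -
  let ?V = "vpaths P r d (s w) n"
  have "t w * adj (t w) = t (c w (s w)) * adj (t w)"
    by (simp add: comp_s_right[OF assms(2)])
  also have "\<dots> = t w * t (s w) * adj (t w)"
    unfolding OGL_rep_comp[OF assms(1,2) s_in[OF assms(2)] r_s[OF assms(2), symmetric]] ..
  also have "\<dots> = (\<Sum>a\<in>?V. t w * (t a * adj (t a)) * adj (t w))"
    unfolding OGL_rep_vertex_sum[OF assms(1) s_in_vertices[OF assms(2)] assms(3)]
    by (simp add: sum_distrib_left sum_distrib_right)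
  also have "\<dots> = (\<Sum>a\<in>?V. t (c w a) * adj (t (c w a)))"
  proof (rule sum.cong)
    fix a assume "a \<in> ?V"
    then have "t (c w a) = t w * t a"
      using OGL_rep_comp[OF assms(1,2)] unfolding vpaths_def by simp
    then show "t w * (t a * adj (t a)) * adj (t w) = t (c w a) * adj (t (c w a))"
      by (simp add: adj_mult mult.assoc)
  qed simp
  also have "\<dots> = (\<Sum>l\<in>c w ` ?V. t l * adj (t l))"
  proof (rule sum.reindex[symmetric, unfolded comp_def])
    show "inj_on (c w) ?V"
    proof (rule inj_onI)
      fix a b assume "a \<in> ?V" "b \<in> ?V" "c w a = c w b"
      moreover have "a = suffix (c w a) (d w)" if "a \<in> ?V" for a
        using suffix_comp[OF assms(2)] that unfolding vpaths_def by simp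
      ultimately show "a = b" by metis
    qed
  qed
  finally show ?thesis .
qed

locale self_similar_k_graph = source_free_k_graph +
  fixes G and act and res
  assumes self_similar: "self_similar k P r s c d G act res"
begin

lemma group_G: "group G"
  using self_similar by (simp add: self_similar_def)

lemma
  assumes "g \<in> carrier G" "\<mu> \<in> P"
  shows act_in: "act g \<mu> \<in> P"
    and d_act: "d (act g \<mu>) = d \<mu>"
    and r_act: "r (act g \<mu>) = act g (r \<mu>)"
  using self_similar assms unfolding self_similar_def by (auto dest: bij_betwE)

lemma
  assumes "g \<in> carrier G" "\<mu> \<in> P"
  shows act_inv_act: "act (inv\<^bsub>G\<^esub> g) (act g \<mu>) = \<mu>"
    and act_act_inv: "act g (act (inv\<^bsub>G\<^esub> g) \<mu>) = \<mu>"
proof -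
  have act_mult: "act (h \<otimes>\<^bsub>G\<^esub> h') \<mu> = act h (act h' \<mu>)" and act_one: "act \<one>\<^bsub>G\<^esub> \<mu> = \<mu>"
    if "h \<in> carrier G" "h' \<in> carrier G" for h h'
    using self_similar assms(2) that unfolding self_similar_def by blast+
  show "act (inv\<^bsub>G\<^esub> g) (act g \<mu>) = \<mu>" "act g (act (inv\<^bsub>G\<^esub> g) \<mu>) = \<mu>"
    using act_mult act_one assms(1) group.l_inv[OF group_G] group.r_inv[OF group_G]
      group.inv_closed[OF group_G] by metis+
qed

lemma res_vertex: "g \<in> carrier G \<Longrightarrow> v \<in> vertices P d \<Longrightarrow> res g v = g"
  using self_similar unfolding self_similar_def by blast

lemma cycline_initial_segments:
  assumes "cycline k P r s c d G act res \<mu> g \<nu>" "inNk k N" "leqv (d \<mu>) N" "leqv (d \<nu>) N"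
    and "is_infpath k P r s c d x" "x zerov zerov = s \<nu>"
  shows "c \<nu> (x zerov (subv N (d \<nu>))) = c \<mu> (act g (x zerov (subv N (d \<mu>))))"
proof -
  have \<mu>\<nu>: "\<mu> \<in> P" "\<nu> \<in> P" and g: "g \<in> carrier G"
    using assms(1) unfolding cycline_def by blast+
  obtain y where y: "is_cat k P r s c d \<mu> (act_inf act res g x) y" "is_cat k P r s c d \<nu> x y"
    using assms(1,5,6) unfolding cycline_def by blast
  have "c \<nu> (x zerov (subv N (d \<nu>))) = y zerov N"
    using is_cat_initial_segment[OF y(2) assms(2) inNk_d assms(4)] \<mu>\<nu> by simp
  also have "\<dots> = c \<mu> (act_inf act res g x zerov (subv N (d \<mu>)))"
    using is_cat_initial_segment[OF y(1) assms(2) inNk_d assms(3)] \<mu>\<nu> by simp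
  also have "act_inf act res g x zerov (subv N (d \<mu>)) = act g (x zerov (subv N (d \<mu>)))"
    unfolding act_inf_def using res_vertex[OF g s_in_vertices[OF \<mu>\<nu>(2)]] assms(6) by simp
  finally show ?thesis .
qed

lemma cycline_extensions_eq:
  assumes cyc: "cycline k P r s c d G act res \<mu> g \<nu>"
    and N: "inNk k N" "leqv (d \<mu>) N" "leqv (d \<nu>) N"
  shows "c \<nu> ` vpaths P r d (s \<nu>) (subv N (d \<nu>)) = c \<mu> ` vpaths P r d (s \<mu>) (subv N (d \<mu>))"
proof
  have \<nu>: "\<nu> \<in> P" and g: "g \<in> carrier G" and s\<mu>: "s \<mu> = act g (s \<nu>)"
    using cyc unfolding cycline_def by blast+
  show "c \<nu> ` vpaths P r d (s \<nu>) (subv N (d \<nu>)) \<subseteq> c \<mu> ` vpaths P r d (s \<mu>) (subv N (d \<mu>))"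
  proof
    fix l assume "l \<in> c \<nu> ` vpaths P r d (s \<nu>) (subv N (d \<nu>))"
    then obtain a where a: "a \<in> P" "r a = s \<nu>" "d a = subv N (d \<nu>)" "l = c \<nu> a"
      unfolding vpaths_def by blast
    obtain x where x: "is_infpath k P r s c d x" "x zerov zerov = r a" "x zerov (d a) = a"
      using path_is_initial_segment_of_infpath[OF a(1)] .
    let ?b = "x zerov (subv N (d \<mu>))"
    have b: "?b \<in> P" "d ?b = subv N (d \<mu>)" "r ?b = s \<nu>"
      using infpath_initial_segment[OF x(1) inNk_subv[OF N(1)]] x(2) a(2) by simp_all
    have "l = c \<mu> (act g ?b)"
      using cycline_initial_segments[OF cyc N x(1)] x a by simp
    moreover have "act g ?b \<in> vpaths P r d (s \<mu>) (subv N (d \<mu>))"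
      unfolding vpaths_def using act_in d_act r_act g b s\<mu> by simp
    ultimately show "l \<in> c \<mu> ` vpaths P r d (s \<mu>) (subv N (d \<mu>))" by blast
  qed
  show "c \<mu> ` vpaths P r d (s \<mu>) (subv N (d \<mu>)) \<subseteq> c \<nu> ` vpaths P r d (s \<nu>) (subv N (d \<nu>))"
  proof
    fix l assume "l \<in> c \<mu> ` vpaths P r d (s \<mu>) (subv N (d \<mu>))"
    then obtain b where b: "b \<in> P" "r b = s \<mu>" "d b = subv N (d \<mu>)" "l = c \<mu> b"
      unfolding vpaths_def by blast
    let ?a = "act (inv\<^bsub>G\<^esub> g) b"
    have inv_g: "inv\<^bsub>G\<^esub> g \<in> carrier G" using group.inv_closed[OF group_G g] .
    have a: "?a \<in> P" "d ?a = subv N (d \<mu>)" "r ?a = s \<nu>"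
      using act_in[OF inv_g b(1)] d_act[OF inv_g b(1)] r_act[OF inv_g b(1)]
        act_inv_act[OF g s_in[OF \<nu>]] b(2,3) s\<mu> by simp_all
    obtain x where x: "is_infpath k P r s c d x" "x zerov zerov = r ?a" "x zerov (d ?a) = ?a"
      using path_is_initial_segment_of_infpath[OF a(1)] .
    have "l = c \<mu> (act g ?a)" using act_act_inv[OF g b(1)] b(4) by simp
    also have "\<dots> = c \<nu> (x zerov (subv N (d \<nu>)))"
      using cycline_initial_segments[OF cyc N x(1)] x a by simp
    finally have "l = c \<nu> (x zerov (subv N (d \<nu>)))" .
    moreover have "x zerov (subv N (d \<nu>)) \<in> vpaths P r d (s \<nu>) (subv N (d \<nu>))"
      unfolding vpaths_def using infpath_initial_segment[OF x(1) inNk_subv[OF N(1)]] x(2) a(3)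
      by simp
    ultimately show "l \<in> c \<nu> ` vpaths P r d (s \<nu>) (subv N (d \<nu>))" by blast
  qed
qed

end

theorem lemma6p9:
  fixes k :: nat and P :: "'p set" and r s :: "'p \<Rightarrow> 'p" and c :: "'p \<Rightarrow> 'p \<Rightarrow> 'p"
    and d :: "'p \<Rightarrow> nat \<Rightarrow> nat" and G :: "('g, 'b) monoid_scheme"
    and act :: "'g \<Rightarrow> 'p \<Rightarrow> 'p" and res :: "'g \<Rightarrow> 'p \<Rightarrow> 'g"
    and u :: "'g \<Rightarrow> 'a::cstar_algebra" and t :: "'p \<Rightarrow> 'a"
    and \<mu> \<nu> :: 'p and g :: 'g
  assumes "kgraph k P r s c d"
    and "row_finite_source_free k P r d"
    and "self_similar k P r s c d G act res"
    and "finite (vertices P d)"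
    and "cycline k P r s c d G act res \<mu> g \<nu>"
    and "OGL_rep k P r s c d G act res u t"
  shows "t \<mu> * adj (t \<mu>) = t \<nu> * adj (t \<nu>)"
proof -
  \<comment> \<open>Finiteness of the vertex set only serves to make O_{G,\<Lambda>} unital.\<close>
  interpret self_similar_k_graph k P r s c d G act res
    using assms(1-3) by unfold_locales
  have \<mu>: "\<mu> \<in> P" and \<nu>: "\<nu> \<in> P" using assms(5) unfolding cycline_def by blast+
  define N where "N = (\<lambda>i. max (d \<mu> i) (d \<nu> i))"
  have N: "inNk k N" "leqv (d \<mu>) N" "leqv (d \<nu>) N"
    using inNk_d[OF \<mu>] inNk_d[OF \<nu>] unfolding N_def inNk_def leqv_def by auto
  have "t \<mu> * adj (t \<mu>) = (\<Sum>l\<in>c \<mu> ` vpaths P r d (s \<mu>) (subv N (d \<mu>)). t l * adj (t l))"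
    using range_projection_expand[OF assms(6) \<mu> inNk_subv[OF N(1)]] .
  also have "\<dots> = (\<Sum>l\<in>c \<nu> ` vpaths P r d (s \<nu>) (subv N (d \<nu>)). t l * adj (t l))"
    unfolding cycline_extensions_eq[OF assms(5) N] ..
  also have "\<dots> = t \<nu> * adj (t \<nu>)"
    using range_projection_expand[OF assms(6) \<nu> inNk_subv[OF N(1)]] by simp
  finally show ?thesis .
qed

end
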